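(* Let $A$ be a finite alphabet and $x\in A^{\mathbb N}$ an infinite word. Then there exists a quasiperiodic infinite word $y$ (over some finite alphabet) that is complexity equivalent to $x$, i.e. there is a positive integer $K$ such that for all $n\geq 1$, $p_n(x)\leq K\,p_{Kn}(y)$ and $p_n(y)\leq K\,p_{Kn}(x)$. *)

theory Defs
  imports Main
begin

definition factor :: "(nat \<Rightarrow> 'a) \<Rightarrow> nat \<Rightarrow> nat \<Rightarrow> 'a list" where
  "factor x k n = map (\<lambda>i. x (k + i)) [0..<n]"

definition complexity :: "(nat \<Rightarrow> 'a) \<Rightarrow> nat \<Rightarrow> nat" where
  "complexity x n = card {factor x k n | k. True}"

definition occurs_at :: "'a list \<Rightarrow> (nat \<Rightarrow> 'a) \<Rightarrow> nat \<Rightarrow> bool" where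
  "occurs_at q x j \<longleftrightarrow> factor x j (length q) = q"

definition quasiperiodic :: "(nat \<Rightarrow> 'a) \<Rightarrow> bool" where
  "quasiperiodic y \<longleftrightarrow> (\<exists>q. q \<noteq> [] \<and>
     (\<forall>i. \<exists>j. j \<le> i \<and> i < j + length q \<and> occurs_at q y j))"

end

theory Submission
  imports Defs
begin

(* Number the letters of x as 0, ..., N - 1 and replace the letter numbered i by the 0-1 block
   (01)^(i+1) 0 (01)^(N+1-i) 0 of common length L = 2N + 6; the position of its unique
   factor 00 identifies the letter. The resulting word y is a concatenation of words (01)^k 0
   with k >= 1, hence is covered by 010. For any L-uniform substitution with injective blocks,
   a factor of x of length n is recovered from the aligned factor of y of length L n, and a
   factor of y of length n is determined by its offset mod L together with a factor of x of
   length n + 1; this gives complexity equivalence with constant L. *)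

definition uniform_subst :: "nat \<Rightarrow> ('a \<Rightarrow> nat \<Rightarrow> 'b) \<Rightarrow> (nat \<Rightarrow> 'a) \<Rightarrow> nat \<Rightarrow> 'b" where
  "uniform_subst L F x p = F (x (p div L)) (p mod L)"

lemma complexity_eq_card_range: "complexity x n = card (range (\<lambda>k. factor x k n))"
  unfolding complexity_def by (simp add: full_SetCompr_eq)

lemma finite_range_factor:
  assumes "finite (range x)"
  shows "finite (range (\<lambda>k. factor x k n))"
proof (rule finite_subset)
  show "range (\<lambda>k. factor x k n) \<subseteq> {xs. set xs \<subseteq> range x \<and> length xs = n}"
    by (auto simp: factor_def)
  show "finite {xs. set xs \<subseteq> range x \<and> length xs = n}"
    using finite_lists_length_eq[OF assms] .
qed

lemma factor_add: "factor x k (m + n) = factor x k m @ factor x (k + m) n"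
  unfolding factor_def by (rule nth_equalityI) (auto simp: nth_append ac_simps)

lemma factor_take_drop:
  assumes "r + n \<le> m"
  shows "factor x (k + r) n = take n (drop r (factor x k m))"
  using assms unfolding factor_def by (intro nth_equalityI) (auto simp: ac_simps)

lemma complexity_mono:
  assumes "finite (range x)" "n \<le> m"
  shows "complexity x n \<le> complexity x m"
proof -
  have "range (\<lambda>k. factor x k n) = take n ` range (\<lambda>k. factor x k m)"
    using factor_take_drop[of 0 n m x] assms(2) by (simp add: image_image)
  then show ?thesis
    unfolding complexity_eq_card_range by (metis card_image_le finite_range_factor assms(1))
qed

lemma finite_range_uniform_subst:
  assumes "0 < L" "finite (range x)"
  shows "finite (range (uniform_subst L F x))"
proof (rule finite_subset)
  show "range (uniform_subst L F x) \<subseteq> case_prod F ` (range x \<times> {..<L})"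
    using assms(1) by (auto simp: uniform_subst_def)
  show "finite (case_prod F ` (range x \<times> {..<L}))"
    using assms(2) by simp
qed

lemma uniform_subst_block:
  assumes "i < L"
  shows "uniform_subst L F x (i + L * m) = F (x m) i"
  using assms by (simp add: uniform_subst_def)

lemma factor_uniform_subst:
  "factor (uniform_subst L F x) (L * k) (L * n) = concat (map (\<lambda>a. map (F a) [0..<L]) (factor x k n))"
proof (induction n)
  case 0
  then show ?case by (simp add: factor_def)
next
  case (Suc n)
  let ?y = "uniform_subst L F x"
  have block: "factor ?y (L * k + L * n) L = map (F (x (k + n))) [0..<L]"
    unfolding factor_def
    by (intro nth_equalityI) (auto simp: uniform_subst_block ac_simps simp flip: add_mult_distrib2)
  have "factor ?y (L * k) (L * Suc n) = factor ?y (L * k) (L * n) @ factor ?y (L * k + L * n) L"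
    by (metis factor_add mult_Suc_right add.commute)
  also have "\<dots> = concat (map (\<lambda>a. map (F a) [0..<L]) (factor x k n @ [x (k + n)]))"
    using Suc.IH block by simp
  also have "factor x k n @ [x (k + n)] = factor x k (Suc n)"
    using factor_add[of x k n 1] by (simp add: factor_def)
  finally show ?case .
qed

lemma concat_map_eq_imp_eq:
  assumes "length u = length v" "set u \<subseteq> A" "set v \<subseteq> A"
    and "inj_on f A" "\<forall>a\<in>A. length (f a) = L"
    and "concat (map f u) = concat (map f v)"
  shows "u = v"
  using assms by (induction u v rule: list_induct2) (auto simp: append_eq_append_conv inj_on_def)

lemma complexity_le_complexity_uniform_subst:
  assumes "0 < L" "finite (range x)" "inj_on (\<lambda>a. map (F a) [0..<L]) (range x)"
  shows "complexity x n \<le> complexity (uniform_subst L F x) (L * n)"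
proof -
  let ?y = "uniform_subst L F x"
  let ?subst = "\<lambda>u. concat (map (\<lambda>a. map (F a) [0..<L]) u)"
  have "inj_on ?subst (range (\<lambda>k. factor x k n))"
    by (intro inj_onI concat_map_eq_imp_eq[where A = "range x" and L = L, OF _ _ _ assms(3)])
      (auto simp: factor_def)
  then have "complexity x n = card (?subst ` range (\<lambda>k. factor x k n))"
    by (simp add: complexity_eq_card_range card_image)
  also have "?subst ` range (\<lambda>k. factor x k n) = range (\<lambda>k. factor ?y (L * k) (L * n))"
    by (auto simp: factor_uniform_subst)
  also have "card \<dots> \<le> complexity ?y (L * n)"
    unfolding complexity_eq_card_range
    by (intro card_mono finite_range_factor finite_range_uniform_subst assms(1,2)) blast
  finally show ?thesis .
qed

lemma complexity_uniform_subst_le: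
  assumes "0 < L" "finite (range x)"
  shows "complexity (uniform_subst L F x) n \<le> L * complexity x (n + 1)"
proof -
  let ?y = "uniform_subst L F x"
  let ?window = "\<lambda>(r, u). take n (drop r (concat (map (\<lambda>a. map (F a) [0..<L]) u)))"
  have "factor ?y j n \<in> ?window ` ({..<L} \<times> range (\<lambda>k. factor x k (n + 1)))" for j
  proof -
    have "n \<le> L * n" "j mod L < L"
      using assms(1) by simp_all
    then have "j mod L + n \<le> L * (n + 1)"
      unfolding distrib_left by linarith
    then have "factor ?y j n = take n (drop (j mod L) (factor ?y (L * (j div L)) (L * (n + 1))))"
      by (metis factor_take_drop div_mult_mod_eq mult.commute)
    also have "\<dots> = ?window (j mod L, factor x (j div L) (n + 1))"
      by (simp only: factor_uniform_subst prod.case)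
    finally show ?thesis
      using assms(1) by (intro image_eqI[where x = "(j mod L, factor x (j div L) (n + 1))"]) auto
  qed
  then have "complexity ?y n \<le> card (?window ` ({..<L} \<times> range (\<lambda>k. factor x k (n + 1))))"
    unfolding complexity_eq_card_range
    by (intro card_mono finite_imageI finite_cartesian_product finite_range_factor assms(2)) auto
  also have "\<dots> \<le> card ({..<L} \<times> range (\<lambda>k. factor x k (n + 1)))"
    by (intro card_image_le finite_cartesian_product finite_range_factor assms(2)) simp
  also have "\<dots> = L * complexity x (n + 1)"
    by (simp add: card_cartesian_product complexity_eq_card_range)
  finally show ?thesis .
qed

lemma complexity_equivalent_uniform_subst:
  assumes "2 \<le> L" "finite (range x)" "inj_on (\<lambda>a. map (F a) [0..<L]) (range x)" "1 \<le> n"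
  shows "complexity x n \<le> L * complexity (uniform_subst L F x) (L * n)"
    and "complexity (uniform_subst L F x) n \<le> L * complexity x (L * n)"
proof -
  have "complexity x n \<le> complexity (uniform_subst L F x) (L * n)"
    using assms(1-3) by (intro complexity_le_complexity_uniform_subst) simp_all
  then show "complexity x n \<le> L * complexity (uniform_subst L F x) (L * n)"
    by (rule order_trans) (use assms(1) in simp)
next
  have "n + 1 \<le> L * n"
    using assms(1,4) mult_le_mono1[OF assms(1), of n] by linarith
  then have "complexity x (n + 1) \<le> complexity x (L * n)"
    by (rule complexity_mono[OF assms(2)])
  moreover have "complexity (uniform_subst L F x) n \<le> L * complexity x (n + 1)"
    using assms(1,2) by (intro complexity_uniform_subst_le) simp_all
  ultimately show "complexity (uniform_subst L F x) n \<le> L * complexity x (L * n)"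
    by (meson dual_order.trans mult_le_mono2)
qed

definition split_block :: "nat \<Rightarrow> nat \<Rightarrow> nat" where
  "split_block m r = (if r < m then r mod 2 else (r - m) mod 2)"

lemma split_block_eq_imp_eq:
  assumes "odd m" "odd m'" "m < L" "m' < L" "\<forall>r<L. split_block m r = split_block m' r"
  shows "m = m'"
proof -
  have "split_block m m \<noteq> split_block m' m" if "odd m" "m < m'" for m m'
    using that by (simp add: split_block_def odd_iff_mod_2_eq_one)
  then show ?thesis
    using assms by (metis linorder_neqE_nat)
qed

lemma inj_on_split_block:
  assumes "inj_on m A" "\<And>a. a \<in> A \<Longrightarrow> odd (m a) \<and> m a < L"
  shows "inj_on (\<lambda>a. map (split_block (m a)) [0..<L]) A"
proof (rule inj_onI)
  fix a b
  assume ab: "a \<in> A" "b \<in> A" "map (split_block (m a)) [0..<L] = map (split_block (m b)) [0..<L]"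
  then have "m a = m b"
    using assms(2)[OF ab(1)] assms(2)[OF ab(2)]
    by (intro split_block_eq_imp_eq[of _ _ L]) (auto simp: map_eq_conv)
  then show "a = b"
    by (rule inj_onD[OF assms(1) _ ab(1,2)])
qed

lemma quasiperiodic_if_alternating_runs:
  fixes y :: "nat \<Rightarrow> nat"
  assumes "\<And>p. \<exists>s M. s \<le> p \<and> p < s + M \<and> odd M \<and> 3 \<le> M \<and> (\<forall>e<M. y (s + e) = e mod 2)"
  shows "quasiperiodic y"
  unfolding quasiperiodic_def
proof (intro exI[of _ "[0, 1, 0]"] conjI allI)
  fix p
  obtain s M where run: "s \<le> p" "p < s + M" "odd M" "3 \<le> M" "\<forall>e<M. y (s + e) = e mod 2"
    using assms by blast
  (* the occurrence of 010 at the largest even offset within the run that still covers p *)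
  define e where "e = min (p - s - (p - s) mod 2) (M - 3)"
  have "even e"
    using run(3,4) by (auto simp: e_def min_def)
  moreover have "e + 2 < M"
    using run(4) by (simp add: e_def)
  ultimately have "y (s + e) = 0" "y (s + (e + 1)) = 1" "y (s + (e + 2)) = 0"
    using run(5)[rule_format, of e] run(5)[rule_format, of "e + 1"] run(5)[rule_format, of "e + 2"]
    by (auto elim!: evenE)
  then have "occurs_at [0, 1, 0] y (s + e)"
    by (simp add: occurs_at_def factor_def numeral_3_eq_3 ac_simps)
  moreover have "s + e \<le> p" "p < s + e + 3"
    using run(1-4) by (auto simp: e_def min_def)
  ultimately show "\<exists>j\<le>p. p < j + length [0, 1, 0::nat] \<and> occurs_at [0, 1, 0] y j"
    by auto
qed simp

lemma quasiperiodic_uniform_subst_split_block: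
  assumes "even L" "\<And>a. a \<in> range x \<Longrightarrow> odd (m a) \<and> 3 \<le> m a \<and> m a + 3 \<le> L"
  shows "quasiperiodic (uniform_subst L (\<lambda>a. split_block (m a)) x)"
proof (rule quasiperiodic_if_alternating_runs)
  fix p
  let ?y = "uniform_subst L (\<lambda>a. split_block (m a)) x"
  define k r where "k = p div L" and "r = p mod L"
  have mk: "odd (m (x k))" "3 \<le> m (x k)" "m (x k) + 3 \<le> L"
    using assms(2) by auto
  then have p: "p = r + L * k" "r < L"
    by (simp_all add: k_def r_def)
  have y: "?y (s + L * k) = split_block (m (x k)) s" if "s < L" for s
    using that by (rule uniform_subst_block)
  show "\<exists>s M. s \<le> p \<and> p < s + M \<and> odd M \<and> 3 \<le> M \<and> (\<forall>e<M. ?y (s + e) = e mod 2)"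
  proof (cases "r < m (x k)")
    case True
    have "\<forall>e<m (x k). ?y (L * k + e) = e mod 2"
      using mk y by (simp add: split_block_def add.commute)
    then show ?thesis
      using p True mk by (intro exI[of _ "L * k"] exI[of _ "m (x k)"]) auto
  next
    case False
    have "\<forall>e<L - m (x k). ?y (L * k + m (x k) + e) = e mod 2"
      using mk y[of "m (x k) + _"] by (simp add: split_block_def ac_simps)
    moreover have "odd (L - m (x k))"
      using mk assms(1) by simp
    ultimately show ?thesis
      using p False mk by (intro exI[of _ "L * k + m (x k)"] exI[of _ "L - m (x k)"]) auto
  qed
qed

theorem mainTheorem1:
  fixes A :: "'a set" and x :: "nat \<Rightarrow> 'a"
  assumes "finite A" and "\<forall>i. x i \<in> A"
  shows "\<exists>y :: nat \<Rightarrow> nat. finite (range y) \<and> quasiperiodic y \<and>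
           (\<exists>K::nat. K > 0 \<and> (\<forall>n\<ge>1. complexity x n \<le> K * complexity y (K * n)
                                    \<and> complexity y n \<le> K * complexity x (K * n)))"
proof -
  obtain idx :: "'a \<Rightarrow> nat" and N where idx: "idx ` A = {i. i < N}" "inj_on idx A"
    using finite_imp_inj_to_nat_seg[OF assms(1)] by blast
  define L where "L = 2 * N + 6"
  define m where "m a = 2 * idx a + 3" for a
  define y where "y = uniform_subst L (\<lambda>a. split_block (m a)) x"
  have range_x: "range x \<subseteq> A"
    using assms(2) by blast
  then have fin: "finite (range x)"
    using assms(1) by (rule finite_subset)
  have idx_less: "idx a < N" if "a \<in> range x" for a
    using that range_x idx(1) by blast
  have m: "odd (m a) \<and> 3 \<le> m a \<and> m a + 3 \<le> L" if "a \<in> range x" for a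
    using idx_less[OF that] by (simp add: m_def L_def)
  have "inj_on m (range x)"
    using inj_on_subset[OF idx(2) range_x] by (simp add: m_def inj_on_def)
  then have blocks_inj: "inj_on (\<lambda>a. map (split_block (m a)) [0..<L]) (range x)"
    by (rule inj_on_split_block) (use m in fastforce)
  have "2 \<le> L"
    by (simp add: L_def)
  have "complexity x n \<le> L * complexity y (L * n) \<and> complexity y n \<le> L * complexity x (L * n)"
    if "1 \<le> n" for n
    using complexity_equivalent_uniform_subst[OF \<open>2 \<le> L\<close> fin blocks_inj that] by (simp add: y_def)
  moreover have "quasiperiodic y"
    unfolding y_def using m by (intro quasiperiodic_uniform_subst_split_block) (simp_all add: L_def)
  moreover have "finite (range y)"
    unfolding y_def using fin \<open>2 \<le> L\<close> by (intro finite_range_uniform_subst) simp_all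
  ultimately show ?thesis
    using \<open>2 \<le> L\<close> by (intro exI[of _ y] conjI exI[of _ L]) simp_all
qed

end
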